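(* Let $B$ be a nonempty finite set and $M\subseteq\omega^B$ an upper set. Then the function $x\mapsto\nu_x(M)$ on $\mathbb{R}_{\ge0}$ is: identically $0$ if $M$ is empty; identically $1$ if $M=\omega^B$; and otherwise strictly increasing and continuous, with $\nu_0(M)=0$ and $\lim_{x\to\infty}\nu_x(M)=1$.
   Context: $\omega$ denotes the set of nonnegative integers and $\omega^B$ the set of functions $B\to\omega$, ordered pointwise. $M\subseteq\omega^B$ is an upper set if $f\in M$ and $f\le g$ imply $g\in M$. The geometric distribution on $\omega$ with parameter $0<p\le1$ assigns probability $p(1-p)^k$ to $k$ (with $0^0=1$). For $T\in\mathbb{R}_{\ge0}$, $\nu_T$ is the probability measure on $\omega^B$ which is the product of $\#B$ copies of the geometric distribution with parameter $(1+T/\#B)^{-1}$. *)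

theory Defs
  imports "HOL-Probability.Probability"
begin

text \<open>omega^B: functions B -> nat, represented extensionally (value undefined outside B).\<close>
abbreviation omega_pow :: "'a set \<Rightarrow> ('a \<Rightarrow> nat) set" where
  "omega_pow B \<equiv> B \<rightarrow>\<^sub>E (UNIV :: nat set)"

definition upper_set :: "'a set \<Rightarrow> ('a \<Rightarrow> nat) set \<Rightarrow> bool" where
  "upper_set B M \<longleftrightarrow> (\<forall>f\<in>M. \<forall>g\<in>omega_pow B. (\<forall>b\<in>B. f b \<le> g b) \<longrightarrow> g \<in> M)"

definition nu :: "'a set \<Rightarrow> real \<Rightarrow> ('a \<Rightarrow> nat) pmf" where
  "nu B T = Pi_pmf B undefined (\<lambda>_. geometric_pmf (inverse (1 + T / real (card B))))"

end

theory Submission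
  imports Defs "HOL-Analysis.Lipschitz"
begin

text \<open>
  For \<open>p' < p\<close> the geometric law with parameter \<open>p'\<close> is the law of \<open>X + Z\<close>, where
  \<open>X\<close> is geometric with parameter \<open>p\<close> and \<open>Z\<close> is an independent gap vanishing with probability
  \<open>p'/p\<close>. Applied coordinatewise this couples \<open>\<nu>\<^sub>T\<close> and \<open>\<nu>\<^sub>T\<^sub>'\<close> for \<open>T < T'\<close> so that the
  second sample dominates the first. An upper set therefore gains probability: strictly, since
  the zero function (which lies outside \<open>M\<close>) can move into \<open>M\<close>, and by at most the probability
  \<open>1 - (p'/p)\<^bsup>|B|\<^esup>\<close> that some coordinate moves, which is at most \<open>T' - T\<close>. Finally \<open>\<nu>\<^sub>0\<close> is
  the point mass at zero, and for \<open>f \<in> M\<close> the box \<open>{g. f \<le> g} \<subseteq> M\<close> has probability tending to 1.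
\<close>

lemma measure_bind_pmf:
  "measure_pmf.prob (P \<bind> Q) X = measure_pmf.expectation P (\<lambda>x. measure_pmf.prob (Q x) X)"
  unfolding measure_pmf_bind
  by (rule measure_pmf.measure_bind)
     (auto intro: measurable_pmf_measure1 prob_space_imp_subprob_space
       simp: space_subprob_algebra measure_pmf.prob_space_axioms)

lemma measure_bind_pmf_closed_diff:
  assumes "\<And>x. x \<in> set_pmf P \<Longrightarrow> x \<in> M \<Longrightarrow> set_pmf (Q x) \<subseteq> M"
  shows "measure_pmf.prob (P \<bind> Q) M - measure_pmf.prob P M
       = measure_pmf.expectation P (\<lambda>x. indicator (- M) x * measure_pmf.prob (Q x) M)"
proof -
  have "measure_pmf.prob (P \<bind> Q) M
      = measure_pmf.expectation P (\<lambda>x. indicator M x + indicator (- M) x * measure_pmf.prob (Q x) M)"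
    unfolding measure_bind_pmf
    using assms by (intro integral_cong_AE AE_pmfI)
      (auto simp: measure_pmf.prob_eq_1 AE_measure_pmf_iff split: split_indicator)
  also have "\<dots> = measure_pmf.prob P M
      + measure_pmf.expectation P (\<lambda>x. indicator (- M) x * measure_pmf.prob (Q x) M)"
    by (subst Bochner_Integration.integral_add)
       (auto intro!: measure_pmf.integrable_const_bound[where B = 1]
         simp: abs_mult mult_le_one split: split_indicator)
  finally show ?thesis by simp
qed

lemma integrable_measure_pmf_kernel:
  "integrable (measure_pmf P) (\<lambda>x. indicator A x * measure_pmf.prob (Q x) M)"
  by (rule measure_pmf.integrable_const_bound[where B = 1])
     (auto simp: abs_mult mult_le_one split: split_indicator)

lemma measure_bind_pmf_closed_ge:
  assumes "\<And>x. x \<in> set_pmf P \<Longrightarrow> x \<in> M \<Longrightarrow> set_pmf (Q x) \<subseteq> M"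
  shows "measure_pmf.prob P M \<le> measure_pmf.prob (P \<bind> Q) M"
proof -
  have "0 \<le> measure_pmf.expectation P (\<lambda>x. indicator (- M) x * measure_pmf.prob (Q x) M)"
    by (intro integral_nonneg_AE) auto
  then show ?thesis
    using measure_bind_pmf_closed_diff[of P M Q, OF assms] by linarith
qed

lemma measure_bind_pmf_closed_diff_le:
  assumes "\<And>x. x \<in> set_pmf P \<Longrightarrow> x \<in> M \<Longrightarrow> set_pmf (Q x) \<subseteq> M"
    and "\<And>x. x \<in> set_pmf P \<Longrightarrow> x \<notin> M \<Longrightarrow> measure_pmf.prob (Q x) M \<le> c" and "0 \<le> c"
  shows "measure_pmf.prob (P \<bind> Q) M - measure_pmf.prob P M \<le> c"
proof -
  have "measure_pmf.expectation P (\<lambda>x. indicator (- M) x * measure_pmf.prob (Q x) M) \<le> c"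
    using assms(2,3)
    by (intro measure_pmf.integral_le_const integrable_measure_pmf_kernel AE_pmfI)
       (auto split: split_indicator)
  then show ?thesis
    using measure_bind_pmf_closed_diff[of P M Q, OF assms(1)] by simp
qed

lemma measure_bind_pmf_closed_less:
  assumes "\<And>x. x \<in> set_pmf P \<Longrightarrow> x \<in> M \<Longrightarrow> set_pmf (Q x) \<subseteq> M"
    and "x \<in> set_pmf P" "x \<notin> M" "0 < measure_pmf.prob (Q x) M"
  shows "measure_pmf.prob P M < measure_pmf.prob (P \<bind> Q) M"
proof -
  let ?g = "\<lambda>y. indicator (- M) y * measure_pmf.prob (Q y) M"
  have "0 < measure_pmf.prob (Q x) M * pmf P x"
    using assms(2,4) by (simp add: pmf_positive)
  also have "\<dots> = measure_pmf.expectation P (\<lambda>y. measure_pmf.prob (Q x) M * indicator {x} y)"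
    by (simp add: measure_pmf_single)
  also have "\<dots> \<le> measure_pmf.expectation P ?g"
    using assms(3)
    by (intro integral_mono integrable_measure_pmf_kernel integrable_mult_right
        measure_pmf.integrable_const_bound[where B = 1])
       (auto split: split_indicator)
  finally show ?thesis
    using measure_bind_pmf_closed_diff[of P M Q, OF assms(1)] by simp
qed

definition geometric_gap_pmf :: "real \<Rightarrow> real \<Rightarrow> nat pmf" where
  "geometric_gap_pmf p p' =
     bernoulli_pmf ((p - p') / p) \<bind> (\<lambda>c. if c then map_pmf Suc (geometric_pmf p') else return_pmf 0)"

lemma pmf_geometric_gap_pmf:
  assumes "0 < p'" "p' < p" "p \<le> 1"
  shows "pmf (geometric_gap_pmf p p') j = (if j = 0 then p' / p else (p - p') / p * ((1 - p') ^ (j - 1) * p'))"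
proof -
  have "pmf (map_pmf Suc (geometric_pmf p')) j = (if j = 0 then 0 else (1 - p') ^ (j - 1) * p')"
    using assms by (cases j) (auto simp: pmf_eq_0_set_pmf pmf_map_inj')
  moreover have "0 \<le> (p - p') / p" "(p - p') / p \<le> 1"
    using assms by (auto simp: field_simps)
  ultimately show ?thesis
    using assms unfolding geometric_gap_pmf_def pmf_bind by (simp add: pmf_return indicator_def field_simps)
qed

lemma pmf_map_pmf_add:
  "pmf (map_pmf ((+) x) q) k = (if x \<le> k then pmf q (k - x) else 0)" for q :: "nat pmf"
proof (cases "x \<le> k")
  case True
  have "pmf (map_pmf ((+) x) q) (x + (k - x)) = pmf q (k - x)"
    by (rule pmf_map_inj') (auto simp: inj_def)
  with True show ?thesis by simp
qed (auto simp: pmf_eq_0_set_pmf)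

lemma geometric_pmf_eq_bind_gap:
  assumes "0 < p'" "p' < p" "p \<le> 1"
  shows "geometric_pmf p' = geometric_pmf p \<bind> (\<lambda>x. map_pmf ((+) x) (geometric_gap_pmf p p'))"
proof (rule pmf_eqI)
  fix k :: nat
  let ?Z = "geometric_gap_pmf p p'"
  have "pmf (geometric_pmf p \<bind> (\<lambda>x. map_pmf ((+) x) ?Z)) k
      = (\<Sum>x\<le>k. pmf ?Z (k - x) * ((1 - p) ^ x * p))"
    unfolding pmf_bind using assms
    by (subst integral_measure_pmf_real[where A = "{..k}"]) (auto simp: pmf_map_pmf_add split: if_splits)
  also have "\<dots> = (\<Sum>x<k. p' * (p - p') * ((1 - p') ^ (k - Suc x) * (1 - p) ^ x)) + p' * (1 - p) ^ k"
    using assms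
    by (simp add: lessThan_Suc_atMost[symmetric] pmf_geometric_gap_pmf, intro sum.cong)
       (auto simp: pmf_geometric_gap_pmf field_simps Suc_diff_Suc)
  also have "(\<Sum>x<k. p' * (p - p') * ((1 - p') ^ (k - Suc x) * (1 - p) ^ x))
      = p' * ((p - p') * (\<Sum>x<k. (1 - p') ^ (k - Suc x) * (1 - p) ^ x))"
    by (simp add: sum_distrib_left mult.assoc)
  also have "(p - p') * (\<Sum>x<k. (1 - p') ^ (k - Suc x) * (1 - p) ^ x) = (1 - p') ^ k - (1 - p) ^ k"
    using power_diff_sumr2[of "1 - p" k "1 - p'"] by (simp add: algebra_simps)
  finally show "pmf (geometric_pmf p') k = pmf (geometric_pmf p \<bind> (\<lambda>x. map_pmf ((+) x) ?Z)) k"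
    using assms by (simp add: algebra_simps)
qed

lemma measure_pmf_geometric_atLeast:
  assumes "0 < p" "p \<le> 1"
  shows "measure_pmf.prob (geometric_pmf p) {m..} = (1 - p) ^ m"
proof -
  have "measure_pmf.prob (geometric_pmf p) {..<m} = (\<Sum>k<m. (1 - p) ^ k * p)"
    using assms by (subst measure_pmf.finite_measure_eq_sum_singleton) (auto simp: measure_pmf_single)
  also have "\<dots> = 1 - (1 - p) ^ m"
    using assms by (simp add: sum_distrib_right[symmetric] sum_gp_strict)
  moreover have "{m..} = UNIV - {..<m}"
    by auto
  ultimately show ?thesis
    using measure_pmf.prob_compl[of "{..<m}" "geometric_pmf p"] by simp
qed

abbreviation geometric_Pi_pmf :: "'a set \<Rightarrow> real \<Rightarrow> ('a \<Rightarrow> nat) pmf" where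
  "geometric_Pi_pmf B p \<equiv> Pi_pmf B undefined (\<lambda>_. geometric_pmf p)"

definition gap_kernel :: "'a set \<Rightarrow> real \<Rightarrow> real \<Rightarrow> ('a \<Rightarrow> nat) \<Rightarrow> ('a \<Rightarrow> nat) pmf" where
  "gap_kernel B p p' f = Pi_pmf B undefined (\<lambda>b. map_pmf ((+) (f b)) (geometric_gap_pmf p p'))"

lemma geometric_Pi_pmf_eq_bind_gap_kernel:
  assumes "finite B" "0 < p'" "p' < p" "p \<le> 1"
  shows "geometric_Pi_pmf B p' = geometric_Pi_pmf B p \<bind> gap_kernel B p p'"
  unfolding gap_kernel_def
  by (subst geometric_pmf_eq_bind_gap[OF assms(2-4)]) (rule Pi_pmf_bind[OF assms(1)])

lemma set_pmf_geometric_Pi_pmf: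
  assumes "finite B"
  shows "set_pmf (geometric_Pi_pmf B p) \<subseteq> omega_pow B"
  using set_Pi_pmf_subset[OF assms, of undefined "\<lambda>_. geometric_pmf p"]
  by (auto simp: PiE_iff extensional_def)

lemma set_pmf_gap_kernel:
  assumes "finite B"
  shows "set_pmf (gap_kernel B p p' f) \<subseteq> PiE_dflt B undefined (\<lambda>b. {f b..})"
  using set_Pi_pmf_subset'[OF assms, of undefined "\<lambda>b. map_pmf ((+) (f b)) (geometric_gap_pmf p p')"]
  unfolding gap_kernel_def by (fastforce simp: PiE_dflt_def)

lemma pmf_gap_kernel_self:
  assumes "finite B" "f \<in> extensional B" "0 < p'" "p' < p" "p \<le> 1"
  shows "pmf (gap_kernel B p p' f) f = (p' / p) ^ card B"
proof -
  have "f x = undefined" if "x \<notin> B" for x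
    using assms(2) that by (auto simp: extensional_def)
  then show ?thesis
    unfolding gap_kernel_def using assms(3-5)
    by (subst pmf_Pi'[OF assms(1)]) (auto simp: pmf_map_pmf_add pmf_geometric_gap_pmf)
qed

lemma pmf_gap_kernel_zero_pos:
  assumes "finite B" "g \<in> omega_pow B" "0 < p'" "p' < p" "p \<le> 1"
  shows "0 < pmf (gap_kernel B p p' (\<lambda>_\<in>B. 0)) g"
proof -
  have "g x = undefined" if "x \<notin> B" for x
    using assms(2) that by (auto simp: PiE_iff extensional_def)
  then show ?thesis
    unfolding gap_kernel_def using assms(3-5)
    by (subst pmf_Pi'[OF assms(1)])
       (auto intro!: prod_pos simp: pmf_map_pmf_add pmf_geometric_gap_pmf)
qed

lemma upper_set_PiE_dflt_atLeast_subset: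
  assumes "upper_set B M" "f \<in> M"
  shows "PiE_dflt B undefined (\<lambda>b. {f b..}) \<subseteq> M"
  using assms unfolding upper_set_def by (force simp: PiE_dflt_def PiE_iff extensional_def)

lemma upper_set_zero_notin:
  assumes "upper_set B M" "M \<subseteq> omega_pow B" "M \<noteq> omega_pow B"
  shows "(\<lambda>_\<in>B. 0) \<notin> M"
  using assms unfolding upper_set_def by (auto simp: PiE_iff)

lemma set_pmf_gap_kernel_subset_upper_set:
  assumes "finite B" "upper_set B M" "f \<in> M"
  shows "set_pmf (gap_kernel B p p' f) \<subseteq> M"
  using set_pmf_gap_kernel[OF assms(1)] upper_set_PiE_dflt_atLeast_subset[OF assms(2,3)] by blast

lemma measure_geometric_Pi_pmf_mono:
  assumes "finite B" "upper_set B M" "0 < p'" "p' < p" "p \<le> 1"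
  shows "measure_pmf.prob (geometric_Pi_pmf B p) M \<le> measure_pmf.prob (geometric_Pi_pmf B p') M"
  unfolding geometric_Pi_pmf_eq_bind_gap_kernel[OF assms(1,3-5)]
  using set_pmf_gap_kernel_subset_upper_set[OF assms(1,2)] by (rule measure_bind_pmf_closed_ge)

lemma measure_geometric_Pi_pmf_diff_le:
  assumes "finite B" "upper_set B M" "0 < p'" "p' < p" "p \<le> 1"
  shows "measure_pmf.prob (geometric_Pi_pmf B p') M - measure_pmf.prob (geometric_Pi_pmf B p) M
       \<le> 1 - (p' / p) ^ card B"
  unfolding geometric_Pi_pmf_eq_bind_gap_kernel[OF assms(1,3-5)]
proof (rule measure_bind_pmf_closed_diff_le)
  fix f assume f: "f \<in> set_pmf (geometric_Pi_pmf B p)" "f \<notin> M"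
  let ?Q = "gap_kernel B p p' f"
  have "f \<in> extensional B"
    using f(1) set_pmf_geometric_Pi_pmf[OF assms(1)] by (auto dest: PiE_iff[THEN iffD1])
  then have "pmf ?Q f = (p' / p) ^ card B"
    using pmf_gap_kernel_self assms by blast
  moreover have "measure_pmf.prob ?Q M + pmf ?Q f = measure_pmf.prob ?Q (M \<union> {f})"
    using f(2) measure_pmf.finite_measure_Union[symmetric, where A = M and B = "{f}"]
    by (simp add: measure_pmf_single)
  ultimately show "measure_pmf.prob ?Q M \<le> 1 - (p' / p) ^ card B"
    using measure_pmf.prob_le_1[of ?Q "M \<union> {f}"] by linarith
qed (use set_pmf_gap_kernel_subset_upper_set[OF assms(1,2)] assms(3-5) in \<open>auto intro!: power_le_one\<close>)

lemma measure_geometric_Pi_pmf_less: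
  assumes "finite B" "upper_set B M" "M \<subseteq> omega_pow B" "M \<noteq> {}" "M \<noteq> omega_pow B"
    and "0 < p'" "p' < p" "p \<le> 1"
  shows "measure_pmf.prob (geometric_Pi_pmf B p) M < measure_pmf.prob (geometric_Pi_pmf B p') M"
  unfolding geometric_Pi_pmf_eq_bind_gap_kernel[OF assms(1,6-8)]
proof (rule measure_bind_pmf_closed_less)
  let ?z = "\<lambda>_\<in>B. 0 :: nat"
  show "?z \<in> set_pmf (geometric_Pi_pmf B p)"
    using assms(6-8) by (simp add: set_pmf_iff pmf_Pi'[OF assms(1)])
  show "?z \<notin> M"
    using upper_set_zero_notin[OF assms(2,3,5)] .
  obtain g where "g \<in> M"
    using assms(4) by blast
  have "0 < pmf (gap_kernel B p p' ?z) g"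
    using \<open>g \<in> M\<close> assms(3) by (intro pmf_gap_kernel_zero_pos[OF assms(1) _ assms(6-8)]) blast
  also have "\<dots> \<le> measure_pmf.prob (gap_kernel B p p' ?z) M"
    using \<open>g \<in> M\<close> by (subst measure_pmf_single[symmetric]) (auto intro!: measure_pmf.finite_measure_mono)
  finally show "0 < measure_pmf.prob (gap_kernel B p p' ?z) M" .
qed (use set_pmf_gap_kernel_subset_upper_set[OF assms(1,2)] in blast)

lemma measure_geometric_Pi_pmf_omega_pow:
  assumes "finite B"
  shows "measure_pmf.prob (geometric_Pi_pmf B p) (omega_pow B) = 1"
  using set_pmf_geometric_Pi_pmf[OF assms] by (subst measure_pmf.prob_eq_1) (auto intro!: AE_pmfI)

lemma prod_le_measure_geometric_Pi_pmf:
  assumes "finite B" "upper_set B M" "f \<in> M" "0 < p" "p \<le> 1"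
  shows "(\<Prod>b\<in>B. (1 - p) ^ f b) \<le> measure_pmf.prob (geometric_Pi_pmf B p) M"
proof -
  have "(\<Prod>b\<in>B. (1 - p) ^ f b)
      = measure_pmf.prob (geometric_Pi_pmf B p) (PiE_dflt B undefined (\<lambda>b. {f b..}))"
    using assms(4,5) by (simp add: measure_Pi_pmf_PiE_dflt[OF assms(1)] measure_pmf_geometric_atLeast)
  also have "\<dots> \<le> measure_pmf.prob (geometric_Pi_pmf B p) M"
    using upper_set_PiE_dflt_atLeast_subset[OF assms(2,3)] by (rule measure_pmf.finite_measure_mono) simp
  finally show ?thesis .
qed

lemma one_sub_ratio_power_le:
  fixes x y :: real
  assumes "0 < n" "0 \<le> x" "x \<le> y"
  shows "1 - ((n + x) / (n + y)) ^ n \<le> y - x"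
proof -
  define r where "r = (n + x) / (n + y)"
  have "1 + n * (r - 1) \<le> (1 + (r - 1)) ^ n"
    using assms unfolding r_def by (intro Bernoulli_inequality) simp
  then have "1 - r ^ n \<le> n * ((y - x) / (n + y))"
    using assms unfolding r_def by (simp add: field_simps)
  also have "\<dots> \<le> y - x"
    using assms by (simp add: field_simps mult_right_mono)
  finally show ?thesis
    unfolding r_def .
qed

lemma nu_eq_geometric_Pi_pmf:
  fixes T :: real
  assumes "finite B" "B \<noteq> {}" "0 \<le> T"
  shows "nu B T = geometric_Pi_pmf B (card B / (card B + T))"
proof -
  have "0 < card B"
    using assms(1,2) by (simp add: card_gt_0_iff)
  then show ?thesis
    using assms(3) by (simp add: nu_def field_simps)
qed

lemma nu_0:
  assumes "finite B"
  shows "nu B 0 = return_pmf (\<lambda>_\<in>B. 0)"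
  using assms by (simp add: nu_def restrict_def)

lemma measure_nu_strict_mono_on:
  assumes "finite B" "B \<noteq> {}" "upper_set B M" "M \<subseteq> omega_pow B" "M \<noteq> {}" "M \<noteq> omega_pow B"
  shows "strict_mono_on {0..} (\<lambda>T. measure_pmf.prob (nu B T) M)"
proof (rule strict_mono_onI)
  fix x y :: real assume "x \<in> {0..}" "y \<in> {0..}" "x < y"
  moreover have "0 < card B"
    using assms(1,2) by (simp add: card_gt_0_iff)
  ultimately show "measure_pmf.prob (nu B x) M < measure_pmf.prob (nu B y) M"
    using nu_eq_geometric_Pi_pmf[OF assms(1,2)]
    by (simp, intro measure_geometric_Pi_pmf_less assms) (auto simp: field_simps)
qed

lemma measure_nu_lipschitz_on:
  assumes "finite B" "B \<noteq> {}" "upper_set B M"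
  shows "1-lipschitz_on {0..} (\<lambda>T. measure_pmf.prob (nu B T) M)"
proof (rule lipschitz_on_leI)
  fix x y :: real assume "x \<in> {0..}" "y \<in> {0..}" "x \<le> y"
  define n where "n = card B"
  define F where "F T = measure_pmf.prob (nu B T) M" for T
  have "0 < n"
    using assms(1,2) by (simp add: n_def card_gt_0_iff)
  have F: "F T = measure_pmf.prob (geometric_Pi_pmf B (n / (n + T))) M" if "0 \<le> T" for T :: real
    using nu_eq_geometric_Pi_pmf[OF assms(1,2) that] by (simp add: F_def n_def)
  show "dist (F x) (F y) \<le> 1 * dist x y"
  proof (cases "x = y")
    case False
    with \<open>x \<in> {0..}\<close> \<open>x \<le> y\<close> have xy: "0 \<le> x" "0 \<le> y" "x < y"
      by auto
    have pp: "0 < n / (n + y)" "n / (n + y) < n / (n + x)" "n / (n + x) \<le> 1"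
      using xy \<open>0 < n\<close> by (auto simp: field_simps)
    have "F y - F x \<le> 1 - ((n / (n + y)) / (n / (n + x))) ^ n"
      unfolding F[OF xy(1)] F[OF xy(2)] n_def
      using measure_geometric_Pi_pmf_diff_le[OF assms(1,3) pp[unfolded n_def]] .
    also have "(n / (n + y)) / (n / (n + x)) = (n + x) / (n + y)"
      using xy \<open>0 < n\<close> by (simp add: divide_simps)
    also have "1 - ((n + x) / (n + y)) ^ n \<le> y - x"
      using one_sub_ratio_power_le \<open>0 < n\<close> xy by simp
    finally have "F y - F x \<le> y - x" .
    moreover have "F x \<le> F y"
      unfolding F[OF xy(1)] F[OF xy(2)] using measure_geometric_Pi_pmf_mono[OF assms(1,3) pp] .
    ultimately show ?thesis
      by (simp add: dist_real_def)
  qed simp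
qed simp

lemma measure_nu_tendsto_1:
  assumes "finite B" "B \<noteq> {}" "upper_set B M" "M \<noteq> {}"
  shows "((\<lambda>T. measure_pmf.prob (nu B T) M) \<longlongrightarrow> 1) at_top"
proof -
  obtain f where "f \<in> M"
    using assms(4) by blast
  define n where "n = real (card B)"
  have "0 < n"
    using assms(1,2) by (simp add: n_def card_gt_0_iff)
  define L where "L T = (\<Prod>b\<in>B. (1 - n / (n + T)) ^ f b)" for T
  have "((\<lambda>T. n / (n + T)) \<longlongrightarrow> 0) at_top"
    by (intro tendsto_divide_0[OF tendsto_const] filterlim_at_top_imp_at_infinity
        filterlim_tendsto_add_at_top[OF tendsto_const] filterlim_ident)
  then have "(L \<longlongrightarrow> (\<Prod>b\<in>B. (1 - 0) ^ f b)) at_top"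
    unfolding L_def by (intro tendsto_intros)
  then have L_limit: "(L \<longlongrightarrow> 1) at_top"
    by simp
  have L_le: "\<forall>\<^sub>F T in at_top. L T \<le> measure_pmf.prob (nu B T) M"
    using eventually_ge_at_top[of 0]
  proof eventually_elim
    case (elim T)
    then show ?case
      unfolding L_def nu_eq_geometric_Pi_pmf[OF assms(1,2) elim] n_def
      using \<open>0 < n\<close> by (intro prod_le_measure_geometric_Pi_pmf assms \<open>f \<in> M\<close>) (auto simp: n_def)
  qed
  show ?thesis
    by (rule tendsto_sandwich[OF L_le _ L_limit tendsto_const]) simp
qed

theorem theorem7:
  fixes B :: "'a set" and M :: "('a \<Rightarrow> nat) set"
  assumes "finite B" and "B \<noteq> {}"
    and "M \<subseteq> omega_pow B" and "upper_set B M"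
  shows "(M = {} \<longrightarrow> (\<forall>x\<ge>0. measure_pmf.prob (nu B x) M = 0))
       \<and> (M = omega_pow B \<longrightarrow> (\<forall>x\<ge>0. measure_pmf.prob (nu B x) M = 1))
       \<and> (M \<noteq> {} \<and> M \<noteq> omega_pow B \<longrightarrow>
            strict_mono_on {0..} (\<lambda>x. measure_pmf.prob (nu B x) M)
          \<and> continuous_on {0..} (\<lambda>x. measure_pmf.prob (nu B x) M)
          \<and> measure_pmf.prob (nu B 0) M = 0
          \<and> ((\<lambda>x. measure_pmf.prob (nu B x) M) \<longlongrightarrow> 1) at_top)"
proof (intro conjI impI allI)
  show "measure_pmf.prob (nu B x) M = 1" if "M = omega_pow B" for x
    using measure_geometric_Pi_pmf_omega_pow[OF assms(1)] that by (simp add: nu_def)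
  assume "M \<noteq> {} \<and> M \<noteq> omega_pow B"
  then have "M \<noteq> {}" "M \<noteq> omega_pow B"
    by auto
  show "strict_mono_on {0..} (\<lambda>x. measure_pmf.prob (nu B x) M)"
    using measure_nu_strict_mono_on assms \<open>M \<noteq> {}\<close> \<open>M \<noteq> omega_pow B\<close> by blast
  show "continuous_on {0..} (\<lambda>x. measure_pmf.prob (nu B x) M)"
    using measure_nu_lipschitz_on[OF assms(1,2,4)] by (rule lipschitz_on_continuous_on)
  show "measure_pmf.prob (nu B 0) M = 0"
    using upper_set_zero_notin[OF assms(4,3) \<open>M \<noteq> omega_pow B\<close>] by (simp add: nu_0[OF assms(1)])
  show "((\<lambda>x. measure_pmf.prob (nu B x) M) \<longlongrightarrow> 1) at_top"
    using measure_nu_tendsto_1 assms \<open>M \<noteq> {}\<close> by blast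
qed simp

end
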